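(* Consider a uniprocessor system of periodic tasks scheduled by a preemptive fixed-priority scheduler. Let $\tau_v$ be a task (the victim control task) and let $hp(\tau_v)$ be the set of tasks with priority higher than $\tau_v$. Each task $\tau_i \in hp(\tau_v)$ has period $T_i>0$ and worst-case execution time $C_i$ with $0 < C_i \le T_i$, and its jobs are released at times $j\cdot T_i$ for integers $j \ge 0$. Let the $k$-th job of $\tau_v$ be released at time $r'_{v,k} = r_{v,k} + \delta \ge 0$, where $r_{v,k}$ is its nominal release time and $\delta \ge 0$ its release delay. A job of $\tau_i\in hp(\tau_v)$ with index $j$ is called a carry-in job for this victim job if $j\cdot T_i < r'_{v,k}$ and $j\cdot T_i + C_i > r'_{v,k}$, and the carry-in interference $I(k)$ is the total amount $\sum_{\tau_i \in hp(\tau_v)} C_i \cdot \#\{\text{carry-in jobs of } \tau_i\}$. Then $$I(k) = \sum_{\tau_i \in hp(\tau_v)} \max\!\left(0,\ \left\lceil \frac{r'_{v,k}}{T_i}\right\rceil - \left\lfloor \frac{r'_{v,k} - C_i}{T_i}\right\rfloor - 1\right) C_i .$$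
   Context: Preemptive fixed-priority (PFP) scheduling on a single core: at each instant the highest-priority released, unfinished job executes. Each job of a task $\tau_i$ is charged at most its worst-case execution time $C_i$ of interference. $\lceil\cdot\rceil$ and $\lfloor\cdot\rfloor$ denote ceiling and floor. *)

theory Defs
  imports Complex_Main
begin

definition carry_in_jobs :: "real \<Rightarrow> real \<Rightarrow> real \<Rightarrow> nat set" where
  "carry_in_jobs Ti Ci r = {j::nat. real j * Ti < r \<and> real j * Ti + Ci > r}"

definition carry_in_interference ::
  "'t set \<Rightarrow> ('t \<Rightarrow> real) \<Rightarrow> ('t \<Rightarrow> real) \<Rightarrow> real \<Rightarrow> real" where
  "carry_in_interference hp T C r =
     (\<Sum>i\<in>hp. C i * real (card (carry_in_jobs (T i) (C i) r)))"

end

theory Submission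
  imports Defs
begin

text \<open>Job \<open>j\<close> is a carry-in job exactly when \<open>\<lfloor>(r - C)/T\<rfloor> < j < \<lceil>r/T\<rceil>\<close>, so the carry-in
  jobs form an interval of consecutive indices. Its lower end \<open>\<lfloor>(r - C)/T\<rfloor> + 1\<close> is
  nonnegative as soon as \<open>C \<le> r + T\<close>, and then the interval has
  \<open>max 0 (\<lceil>r/T\<rceil> - \<lfloor>(r - C)/T\<rfloor> - 1)\<close> elements.\<close>

lemma carry_in_jobs_eq_atLeastLessThan:
  fixes Ti Ci r :: real
  assumes "Ti > 0"
  shows "carry_in_jobs Ti Ci r = {nat (\<lfloor>(r - Ci) / Ti\<rfloor> + 1) ..< nat \<lceil>r / Ti\<rceil>}"
proof (rule set_eqI)
  fix j :: nat
  have released_before: "real j * Ti < r \<longleftrightarrow> int j < \<lceil>r / Ti\<rceil>"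
    unfolding less_ceiling_iff using assms by (simp add: field_simps)
  have unfinished: "r < real j * Ti + Ci \<longleftrightarrow> \<lfloor>(r - Ci) / Ti\<rfloor> < int j"
    unfolding floor_less_iff using assms by (simp add: field_simps)
  show "j \<in> carry_in_jobs Ti Ci r \<longleftrightarrow> j \<in> {nat (\<lfloor>(r - Ci) / Ti\<rfloor> + 1) ..< nat \<lceil>r / Ti\<rceil>}"
    unfolding carry_in_jobs_def using released_before unfinished by auto
qed

lemma card_carry_in_jobs:
  fixes Ti Ci r :: real
  assumes "Ti > 0" and "Ci \<le> r + Ti"
  shows "real (card (carry_in_jobs Ti Ci r)) =
    real_of_int (max 0 (\<lceil>r / Ti\<rceil> - \<lfloor>(r - Ci) / Ti\<rfloor> - 1))"
proof -
  have "(r - Ci) / Ti \<ge> -1" using assms by (simp add: field_simps)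
  then have "\<lfloor>(r - Ci) / Ti\<rfloor> + 1 \<ge> 0" by linarith
  then show ?thesis
    unfolding carry_in_jobs_eq_atLeastLessThan[OF assms(1)] by simp
qed

theorem lemma1:
  fixes hp :: "'t set" and T C :: "'t \<Rightarrow> real" and r_nom delta :: real
  assumes "finite hp"
    and "\<And>i. i \<in> hp \<Longrightarrow> T i > 0"
    and "\<And>i. i \<in> hp \<Longrightarrow> 0 < C i \<and> C i \<le> T i"
    and "delta \<ge> 0"
    and "r_nom + delta \<ge> 0"
  shows "carry_in_interference hp T C (r_nom + delta) =
    (\<Sum>i\<in>hp. real_of_int (max 0 (\<lceil>(r_nom + delta) / T i\<rceil>
        - \<lfloor>((r_nom + delta) - C i) / T i\<rfloor> - 1)) * C i)"
  unfolding carry_in_interference_def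
proof (rule sum.cong)
  fix i assume "i \<in> hp"
  with assms(2,3,5) have "T i > 0" and "C i \<le> (r_nom + delta) + T i" by force+
  then show "C i * real (card (carry_in_jobs (T i) (C i) (r_nom + delta))) =
    real_of_int (max 0 (\<lceil>(r_nom + delta) / T i\<rceil>
        - \<lfloor>((r_nom + delta) - C i) / T i\<rfloor> - 1)) * C i"
    by (simp add: card_carry_in_jobs)
qed simp

end
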